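(* There exists a family of smooth functions $\{\varphi_t:[0,\frac{\pi}{2}]\to[0,1]\}_{t\in(0,1]}$, depending continuously on $t$, such that for each $t\in(0,1]$: (1) all even-order derivatives of $\varphi_t$ vanish at $0$, $\varphi_t'(0)=1$, all odd-order derivatives of $\varphi_t$ vanish at $\frac{\pi}{2}$, and $\varphi_t(\frac{\pi}{2})>0$; (2) $\varphi_t(r)\le 3t\sin(r)$ for all $r\in(t,\frac{\pi}{2}]$; (3) on $(0,\frac{\pi}{2})$, $$\frac{-\varphi_t''}{\varphi_t}\ \ge\ \tan\cdot\frac{\varphi_t'}{\varphi_t}\ \ge\ \max\{t,1-t\}.$$
   Context: Here $\tan\cdot\frac{\varphi_t'}{\varphi_t}$ denotes the function $r\mapsto\tan(r)\varphi_t'(r)/\varphi_t(r)$. *)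

theory Defs
  imports "HOL-Analysis.Analysis"
begin

text \<open>D is the sequence of all higher derivatives of f on the set S (one-sided at
  boundary points of a closed interval): D 0 = f and D (Suc k) is the derivative of
  D k within S at every point of S. A function admitting such D on [a,b] is smooth
  there, and on a nondegenerate interval D is uniquely determined.\<close>
definition higher_derivs_on :: "(nat \<Rightarrow> real \<Rightarrow> real) \<Rightarrow> (real \<Rightarrow> real) \<Rightarrow> real set \<Rightarrow> bool" where
  "higher_derivs_on D f S \<longleftrightarrow> D 0 = f \<and>
     (\<forall>k. \<forall>x\<in>S. (D k has_real_derivative D (Suc k) x) (at x within S))"

end

theory Submission
  imports Defs "HOL-Complex_Analysis.Complex_Analysis"
begin

(* We take \<phi>_t(r) = h(sin r) with h(s) = s (1 + d s^2) powr (-t/2) and a constant d = d(t) \<ge> 0.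
   Smoothness and the boundary conditions come from the holomorphic extension
   z \<mapsto> sin z (1 + d sin^2 z) powr (-t/2), which is odd and symmetric about pi/2; the
   derivatives of \<phi>_t are the real parts of its complex derivatives.  On (0, pi/2) we have
   tan r \<phi>_t'/\<phi>_t = s h'(s)/h(s) = 1 - t + t/(1 + d s^2) \<in> [1 - t, 1], and -\<phi>_t''/\<phi>_t exceeds
   it by -h''(s) cos^2 r/h(s) \<ge> 0 since h is concave on [0, 1].  For t \<ge> 1/3 we take d = 0;
   for t < 1/3 we choose d with (1 + d sin^2 t) powr (-t/2) = 3t, so that \<phi>_t(r) \<le> 3t sin r
   for r \<ge> t by monotonicity of sin, while max t (1 - t) = 1 - t. *)

lemma has_real_derivative_Re_higher_deriv:
  assumes "F holomorphic_on S" "open S" "complex_of_real x \<in> S"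
  shows "((\<lambda>x. Re ((deriv ^^ k) F (of_real x))) has_real_derivative
           Re ((deriv ^^ Suc k) F (of_real x))) (at x within T)"
proof -
  have "((deriv ^^ k) F has_field_derivative (deriv ^^ Suc k) F (of_real x)) (at (of_real x))"
    using has_field_derivative_higher_deriv[OF assms] .
  then have "((\<lambda>x. (deriv ^^ k) F (of_real x)) has_vector_derivative
               (deriv ^^ Suc k) F (of_real x)) (at x within T)"
    by (rule has_vector_derivative_real_field)
  then show ?thesis
    by (rule has_field_derivative_Re)
qed

lemma higher_deriv_eq_0_at_reflection_centre:
  fixes F :: "complex \<Rightarrow> complex"
  assumes holo: "F holomorphic_on S" and S: "open S" "c \<in> S"
    and refl: "\<And>z. z \<in> S \<Longrightarrow> 2 * c - z \<in> S"
    and sym: "\<And>z. z \<in> S \<Longrightarrow> F (2 * c - z) = \<sigma> * F z"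
    and sign: "\<sigma> * (-1) ^ k = -1"
  shows "(deriv ^^ k) F c = 0"
proof -
  have refl': "\<And>z. z \<in> S \<Longrightarrow> (-1) * z + 2 * c \<in> S"
    using refl by simp
  have "(F \<circ> (\<lambda>z. (-1) * z + 2 * c)) holomorphic_on S"
    using refl' by (intro holomorphic_on_compose_gen[OF _ holo]) (auto intro: holomorphic_intros)
  then have holo_refl: "(\<lambda>z. F ((-1) * z + 2 * c)) holomorphic_on S"
    by (simp add: o_def)
  have "(deriv ^^ k) F c = (deriv ^^ k) (\<lambda>z. \<sigma> * F ((-1) * z + 2 * c)) c"
  proof (rule higher_deriv_transform_within_open[OF holo _ S])
    show "(\<lambda>z. \<sigma> * F ((-1) * z + 2 * c)) holomorphic_on S"
      using holo_refl by (intro holomorphic_intros)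
    show "F z = \<sigma> * F ((-1) * z + 2 * c)" if "z \<in> S" for z
      using sym[OF refl[OF that]] by simp
  qed
  also have "\<dots> = \<sigma> * (deriv ^^ k) (\<lambda>z. F ((-1) * z + 2 * c)) c"
    by (rule higher_deriv_cmult[OF holo_refl S(2,1)])
  also have "\<dots> = \<sigma> * (-1) ^ k * (deriv ^^ k) F c"
    using higher_deriv_compose_linear'[OF holo S(1) S(1) S(2) refl'] by simp
  also have "\<dots> = - (deriv ^^ k) F c"
    using sign by simp
  finally show ?thesis
    by simp
qed

definition profile :: "real \<Rightarrow> real \<Rightarrow> real \<Rightarrow> real" where
  "profile d t s = s * (1 + d * s\<^sup>2) powr (-t/2)"

definition profile_deriv :: "real \<Rightarrow> real \<Rightarrow> real \<Rightarrow> real" where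
  "profile_deriv d t s = (1 + d * s\<^sup>2) powr (-t/2) * (1 - t + t / (1 + d * s\<^sup>2))"

definition profile_deriv2 :: "real \<Rightarrow> real \<Rightarrow> real \<Rightarrow> real" where
  "profile_deriv2 d t s =
     - t * d * s * (1 + d * s\<^sup>2) powr (-t/2) * (3 + (1 - t) * d * s\<^sup>2) / (1 + d * s\<^sup>2)\<^sup>2"

lemma has_real_derivative_profile_factor:
  assumes "0 \<le> d"
  shows "((\<lambda>s. (1 + d * s\<^sup>2) powr (-t/2)) has_real_derivative
           - t * d * s * (1 + d * s\<^sup>2) powr (-t/2) / (1 + d * s\<^sup>2)) (at s)"
proof -
  have W: "0 < 1 + d * s\<^sup>2"
    using assms by (simp add: add_pos_nonneg)
  have "((\<lambda>s. (1 + d * s\<^sup>2) powr (-t/2)) has_real_derivative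
           (-t/2) * (1 + d * s\<^sup>2) powr (-t/2 - 1) * (2 * d * s)) (at s)"
    by (rule derivative_eq_intros refl W)+ simp
  moreover have "(1 + d * s\<^sup>2) powr (-t/2 - 1) = (1 + d * s\<^sup>2) powr (-t/2) / (1 + d * s\<^sup>2)"
    using W by (simp add: powr_diff)
  ultimately show ?thesis
    by (simp add: field_simps)
qed

lemma has_real_derivative_profile:
  assumes "0 \<le> d"
  shows "(profile d t has_real_derivative profile_deriv d t s) (at s)"
proof -
  have W: "0 < 1 + d * s\<^sup>2"
    using assms by (simp add: add_pos_nonneg)
  show ?thesis
    unfolding profile_def[abs_def]
    by (rule has_real_derivative_profile_factor[OF assms] derivative_eq_intros refl)+
      (use W in \<open>simp add: profile_deriv_def field_simps power2_eq_square\<close>)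
qed

lemma has_real_derivative_profile_deriv:
  assumes "0 \<le> d"
  shows "(profile_deriv d t has_real_derivative profile_deriv2 d t s) (at s)"
proof -
  define W where "W = 1 + d * s\<^sup>2"
  define P where "P = W powr (-t/2)"
  have W: "0 < W"
    using assms by (simp add: W_def add_pos_nonneg)
  have "((\<lambda>s. 1 - t + t / (1 + d * s\<^sup>2)) has_real_derivative - 2 * t * d * s / W\<^sup>2) (at s)"
    by (rule derivative_eq_intros refl)+ (use W in \<open>simp_all add: W_def field_simps power2_eq_square\<close>)
  note product_rule = DERIV_mult[OF has_real_derivative_profile_factor[OF assms, where t=t] this]
  have "- t * d * s * P / W * (1 - t + t / W) + - 2 * t * d * s / W\<^sup>2 * P = profile_deriv2 d t s"
    unfolding profile_deriv2_def W_def[symmetric] P_def[symmetric]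
    using W by (simp add: field_simps power2_eq_square) (simp add: W_def algebra_simps power2_eq_square)
  with product_rule show ?thesis
    unfolding profile_deriv_def[abs_def] W_def P_def by simp
qed

definition profile_ext :: "real \<Rightarrow> real \<Rightarrow> complex \<Rightarrow> complex" where
  "profile_ext d t z = sin z * exp (of_real (-t/2) * Ln (1 + of_real d * (sin z)\<^sup>2))"

definition profile_ext_domain :: "real \<Rightarrow> complex set" where
  "profile_ext_domain d = {z. 0 < Re (1 + of_real d * (sin z)\<^sup>2)}"

lemma open_profile_ext_domain: "open (profile_ext_domain d)"
  unfolding profile_ext_domain_def by (intro open_Collect_less continuous_intros)

lemma of_real_in_profile_ext_domain:
  assumes "0 \<le> d"
  shows "complex_of_real x \<in> profile_ext_domain d"
proof -
  have "Re (1 + of_real d * (sin (complex_of_real x))\<^sup>2) = 1 + d * (sin x)\<^sup>2"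
    by (simp add: sin_of_real flip: of_real_power)
  moreover have "0 < 1 + d * (sin x)\<^sup>2"
    using assms by (simp add: add_pos_nonneg)
  ultimately show ?thesis
    unfolding profile_ext_domain_def mem_Collect_eq by linarith
qed

lemma minus_in_profile_ext_domain: "z \<in> profile_ext_domain d \<Longrightarrow> - z \<in> profile_ext_domain d"
  by (simp add: profile_ext_domain_def)

lemma pi_minus_in_profile_ext_domain:
  "z \<in> profile_ext_domain d \<Longrightarrow> of_real pi - z \<in> profile_ext_domain d"
  by (simp add: profile_ext_domain_def sin_diff)

lemma holomorphic_on_profile_ext: "profile_ext d t holomorphic_on profile_ext_domain d"
proof -
  have "1 + of_real d * (sin z)\<^sup>2 \<notin> \<real>\<^sub>\<le>\<^sub>0" if "z \<in> profile_ext_domain d" for z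
    using that by (auto simp: profile_ext_domain_def complex_nonpos_Reals_iff)
  then show ?thesis
    unfolding profile_ext_def[abs_def] by (intro holomorphic_intros) auto
qed

lemma profile_ext_of_real:
  assumes "0 \<le> d"
  shows "profile_ext d t (of_real x) = of_real (profile d t (sin x))"
proof -
  have W: "0 < 1 + d * (sin x)\<^sup>2"
    using assms by (simp add: add_pos_nonneg)
  have "profile_ext d t (of_real x) =
          of_real (sin x) * exp (of_real (-t/2) * Ln (of_real (1 + d * (sin x)\<^sup>2)))"
    by (simp add: profile_ext_def sin_of_real)
  also have "\<dots> = of_real (sin x * exp (-t/2 * ln (1 + d * (sin x)\<^sup>2)))"
    by (simp only: Ln_of_real[OF W] of_real_mult[symmetric] exp_of_real)
  finally show ?thesis
    using W by (simp add: profile_def powr_def)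
qed

lemma profile_ext_minus: "profile_ext d t (- z) = - profile_ext d t z"
  by (simp add: profile_ext_def)

lemma profile_ext_pi_minus: "profile_ext d t (of_real pi - z) = profile_ext d t z"
  by (simp add: profile_ext_def sin_diff)

definition profile_derivs :: "real \<Rightarrow> real \<Rightarrow> nat \<Rightarrow> real \<Rightarrow> real" where
  "profile_derivs d t k x = Re ((deriv ^^ k) (profile_ext d t) (of_real x))"

lemma profile_derivs_0:
  assumes "0 \<le> d"
  shows "profile_derivs d t 0 = (\<lambda>r. profile d t (sin r))"
  using profile_ext_of_real[OF assms] by (simp add: profile_derivs_def fun_eq_iff)

lemma has_real_derivative_profile_derivs:
  assumes "0 \<le> d"
  shows "(profile_derivs d t k has_real_derivative profile_derivs d t (Suc k) x) (at x within T)"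
  unfolding profile_derivs_def[abs_def]
  by (rule has_real_derivative_Re_higher_deriv[OF holomorphic_on_profile_ext
        open_profile_ext_domain of_real_in_profile_ext_domain[OF assms]])

lemma higher_derivs_on_profile_derivs:
  assumes "0 \<le> d"
  shows "higher_derivs_on (profile_derivs d t) (\<lambda>r. profile d t (sin r)) T"
  using profile_derivs_0[OF assms] has_real_derivative_profile_derivs[OF assms]
  by (simp add: higher_derivs_on_def)

lemma profile_derivs_even_at_0:
  assumes "0 \<le> d"
  shows "profile_derivs d t (2 * k) 0 = 0"
proof -
  have "(deriv ^^ (2 * k)) (profile_ext d t) 0 = 0"
    by (rule higher_deriv_eq_0_at_reflection_centre[where \<sigma> = "-1", OF holomorphic_on_profile_ext
          open_profile_ext_domain of_real_in_profile_ext_domain[OF assms, of 0, simplified]])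
      (simp_all add: minus_in_profile_ext_domain profile_ext_minus)
  then show ?thesis
    by (simp add: profile_derivs_def)
qed

lemma profile_derivs_odd_at_pi_half:
  assumes "0 \<le> d"
  shows "profile_derivs d t (2 * k + 1) (pi/2) = 0"
proof -
  have "(deriv ^^ (2 * k + 1)) (profile_ext d t) (of_real (pi/2)) = 0"
    by (rule higher_deriv_eq_0_at_reflection_centre[where \<sigma> = 1, OF holomorphic_on_profile_ext
          open_profile_ext_domain of_real_in_profile_ext_domain[OF assms]])
      (simp_all add: pi_minus_in_profile_ext_domain profile_ext_pi_minus)
  then show ?thesis
    by (simp add: profile_derivs_def)
qed

lemma profile_derivs_1:
  assumes "0 \<le> d"
  shows "profile_derivs d t 1 r = profile_deriv d t (sin r) * cos r"
proof (rule DERIV_unique)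
  show "((\<lambda>r. profile d t (sin r)) has_real_derivative profile_derivs d t 1 r) (at r)"
    using has_real_derivative_profile_derivs[OF assms, of t 0] by (simp add: profile_derivs_0[OF assms])
  show "((\<lambda>r. profile d t (sin r)) has_real_derivative profile_deriv d t (sin r) * cos r) (at r)"
    by (rule DERIV_chain2[OF has_real_derivative_profile[OF assms] DERIV_sin])
qed

lemma profile_derivs_2:
  assumes "0 \<le> d"
  shows "profile_derivs d t 2 r =
           profile_deriv2 d t (sin r) * (cos r)\<^sup>2 - sin r * profile_deriv d t (sin r)"
proof (rule DERIV_unique)
  have first_deriv: "profile_derivs d t 1 = (\<lambda>r. profile_deriv d t (sin r) * cos r)"
    using profile_derivs_1[OF assms] by (rule ext)
  show "(profile_derivs d t 1 has_real_derivative profile_derivs d t 2 r) (at r)"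
    using has_real_derivative_profile_derivs[OF assms, of t 1] by (simp add: numeral_2_eq_2)
  have "((\<lambda>r. profile_deriv d t (sin r) * cos r) has_real_derivative
          profile_deriv2 d t (sin r) * cos r * cos r + - sin r * profile_deriv d t (sin r)) (at r)"
    by (rule DERIV_mult[OF DERIV_chain2[OF has_real_derivative_profile_deriv[OF assms] DERIV_sin] DERIV_cos])
  then show "(profile_derivs d t 1 has_real_derivative
               profile_deriv2 d t (sin r) * (cos r)\<^sup>2 - sin r * profile_deriv d t (sin r)) (at r)"
    unfolding first_deriv by (simp add: power2_eq_square mult.assoc)
qed

lemma profile_mem_unit_interval:
  assumes "0 \<le> d" "0 \<le> t" "0 \<le> s" "s \<le> 1"
  shows "profile d t s \<in> {0..1}"
proof -
  have "1 \<le> 1 + d * s\<^sup>2"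
    using assms by simp
  then have "(1 + d * s\<^sup>2) powr (-t/2) \<le> 1 powr (-t/2)"
    using assms by (intro powr_mono2') auto
  then show ?thesis
    using assms by (auto simp: profile_def intro: mult_le_one)
qed

lemma profile_pos:
  assumes "0 \<le> d" "0 < s"
  shows "0 < profile d t s"
proof -
  have "0 < 1 + d * s\<^sup>2"
    using assms by (simp add: add_pos_nonneg)
  then show ?thesis
    using assms by (simp add: profile_def)
qed

lemma profile_deriv2_nonpos:
  assumes "0 \<le> d" "0 \<le> t" "t \<le> 1" "0 \<le> s"
  shows "profile_deriv2 d t s \<le> 0"
  using assms unfolding profile_deriv2_def
  by (intro divide_nonpos_nonneg mult_nonpos_nonneg mult_nonneg_nonneg add_nonneg_nonneg) auto

lemma profile_log_deriv:
  assumes "0 \<le> d" "0 < s"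
  shows "s * profile_deriv d t s / profile d t s = 1 - t + t / (1 + d * s\<^sup>2)"
proof -
  have "0 < 1 + d * s\<^sup>2"
    using assms by (simp add: add_pos_nonneg)
  then show ?thesis
    using assms by (simp add: profile_def profile_deriv_def)
qed

lemma tan_mult_profile_derivs_1:
  assumes "0 \<le> d" "0 < r" "r < pi/2"
  shows "tan r * profile_derivs d t 1 r / profile d t (sin r) = 1 - t + t / (1 + d * (sin r)\<^sup>2)"
proof -
  have "cos r \<noteq> 0"
    using assms cos_gt_zero[of r] by auto
  then have "tan r * profile_derivs d t 1 r = sin r * profile_deriv d t (sin r)"
    unfolding profile_derivs_1[OF assms(1)] tan_def by simp
  then show ?thesis
    using assms sin_gt_zero[of r] by (simp add: profile_log_deriv)
qed

lemma tan_mult_profile_derivs_1_le: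
  assumes "0 \<le> d" "0 \<le> t" "t \<le> 1" "0 < r" "r < pi/2"
  shows "tan r * profile_derivs d t 1 r / profile d t (sin r) \<le>
           - profile_derivs d t 2 r / profile d t (sin r)"
proof -
  have s: "0 < sin r" and c: "0 < cos r"
    using assms by (auto intro: sin_gt_zero cos_gt_zero)
  have pos: "0 < profile d t (sin r)"
    using profile_pos[OF assms(1) s] .
  have "tan r * profile_derivs d t 1 r = sin r * profile_deriv d t (sin r)"
    using c unfolding profile_derivs_1[OF assms(1)] tan_def by simp
  also have "\<dots> \<le> sin r * profile_deriv d t (sin r) - profile_deriv2 d t (sin r) * (cos r)\<^sup>2"
    using profile_deriv2_nonpos[OF assms(1-3)] s by (simp add: mult_nonpos_nonneg)
  also have "\<dots> = - profile_derivs d t 2 r"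
    by (simp add: profile_derivs_2[OF assms(1)])
  finally have "tan r * profile_derivs d t 1 r \<le> - profile_derivs d t 2 r" .
  from divide_right_mono[OF this less_imp_le[OF pos]] show ?thesis
    by simp
qed

definition profile_coeff :: "real \<Rightarrow> real" where
  "profile_coeff t = max 0 ((3 * t) powr (-2/t) - 1) / (sin t)\<^sup>2"

lemma profile_coeff_nonneg: "0 \<le> profile_coeff t"
  by (simp add: profile_coeff_def)

lemma profile_coeff_eq_0:
  assumes "1/3 \<le> t"
  shows "profile_coeff t = 0"
proof -
  have "(3 * t) powr (-2/t) \<le> 1 powr (-2/t)"
    using assms by (intro powr_mono2') (auto simp: divide_simps)
  then show ?thesis
    by (simp add: profile_coeff_def)
qed

lemma max_le_profile_log_deriv:
  assumes "0 < t" "t \<le> 1"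
  shows "max t (1 - t) \<le> 1 - t + t / (1 + profile_coeff t * s\<^sup>2)"
proof -
  have "0 < 1 + profile_coeff t * s\<^sup>2"
    by (simp add: profile_coeff_nonneg add_pos_nonneg)
  then have "1 - t \<le> 1 - t + t / (1 + profile_coeff t * s\<^sup>2)"
    using assms by simp
  moreover have "t \<le> 1 - t + t / (1 + profile_coeff t * s\<^sup>2)"
  proof (cases "1/3 \<le> t")
    case True
    then show ?thesis
      using assms by (simp add: profile_coeff_eq_0)
  qed (use \<open>1 - t \<le> _\<close> in linarith)
  ultimately show ?thesis
    by simp
qed

lemma profile_coeff_profile_le:
  assumes t: "0 < t" "t \<le> 1" and r: "t < r" "r \<le> pi/2"
  shows "profile (profile_coeff t) t (sin r) \<le> 3 * t * sin r"
proof -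
  define X where "X = (3 * t) powr (-2/t)"
  have "0 < X"
    using t by (simp add: X_def)
  have sin_t: "0 < sin t"
    using t pi_gt3 by (intro sin_gt_zero) auto
  have "sin t \<le> sin r"
    using t r by (intro sin_monotone_2pi_le) auto
  then have "profile_coeff t * (sin t)\<^sup>2 \<le> profile_coeff t * (sin r)\<^sup>2"
    using sin_t by (intro mult_left_mono power_mono profile_coeff_nonneg) auto
  moreover have "profile_coeff t * (sin t)\<^sup>2 = max 0 (X - 1)"
    using sin_t by (simp add: profile_coeff_def X_def)
  ultimately have "X \<le> 1 + profile_coeff t * (sin r)\<^sup>2"
    by linarith
  then have "(1 + profile_coeff t * (sin r)\<^sup>2) powr (-t/2) \<le> X powr (-t/2)"
    using t \<open>0 < X\<close> by (intro powr_mono2') auto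
  also have "X powr (-t/2) = 3 * t"
    using t by (simp add: X_def powr_powr)
  finally show ?thesis
    using sin_t \<open>sin t \<le> sin r\<close> by (simp add: profile_def mult_left_mono mult.commute)
qed

lemma continuous_on_profile_family:
  "continuous_on ({0<..1} \<times> {0..pi/2}) (\<lambda>(t, r). profile (profile_coeff t) t (sin r))"
proof -
  have sin_ne: "sin t \<noteq> 0" if "0 < t" "t \<le> 1" for t :: real
    using that pi_gt3 sin_gt_zero[of t] by auto
  have W_ne: "1 + profile_coeff t * (sin r)\<^sup>2 \<noteq> 0" for t r :: real
    using add_pos_nonneg[OF zero_less_one, of "profile_coeff t * (sin r)\<^sup>2"]
    by (simp add: profile_coeff_nonneg)
  have "continuous_on {0<..1} profile_coeff"
    unfolding profile_coeff_def by (intro continuous_intros) (auto simp: sin_ne)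
  then show ?thesis
    unfolding profile_def case_prod_unfold
    by (intro continuous_intros continuous_on_compose2[OF \<open>continuous_on {0<..1} profile_coeff\<close>])
      (auto simp: W_ne)
qed

theorem lemma3p3:
  shows "\<exists>\<phi> :: real \<Rightarrow> real \<Rightarrow> real.
    continuous_on ({0<..1} \<times> {0..pi/2}) (\<lambda>(t, r). \<phi> t r) \<and>
    (\<forall>t\<in>{0<..1}.
      (\<forall>r\<in>{0..pi/2}. \<phi> t r \<in> {0..1}) \<and>
      (\<exists>D. higher_derivs_on D (\<phi> t) {0..pi/2} \<and>
        (\<forall>k. D (2*k) 0 = 0) \<and> D 1 0 = 1 \<and>
        (\<forall>k. D (2*k+1) (pi/2) = 0) \<and> \<phi> t (pi/2) > 0 \<and>
        (\<forall>r\<in>{t<..pi/2}. \<phi> t r \<le> 3 * t * sin r) \<and>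
        (\<forall>r\<in>{0<..<pi/2}.
           - D 2 r / \<phi> t r \<ge> tan r * D 1 r / \<phi> t r \<and>
           tan r * D 1 r / \<phi> t r \<ge> max t (1 - t))))"
  apply (intro exI[of _ "\<lambda>t r. profile (profile_coeff t) t (sin r)"] conjI ballI
      continuous_on_profile_family)
  subgoal for t r
    by (intro profile_mem_unit_interval profile_coeff_nonneg sin_ge_zero) auto
  subgoal for t
    using higher_derivs_on_profile_derivs[OF profile_coeff_nonneg]
      profile_derivs_even_at_0[OF profile_coeff_nonneg]
      profile_derivs_odd_at_pi_half[OF profile_coeff_nonneg]
      profile_derivs_1[OF profile_coeff_nonneg, of t t 0] profile_pos[OF profile_coeff_nonneg]
      profile_coeff_profile_le[of t] tan_mult_profile_derivs_1_le[OF profile_coeff_nonneg, of t]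
      tan_mult_profile_derivs_1[OF profile_coeff_nonneg] max_le_profile_log_deriv[of t]
    by (intro exI[of _ "profile_derivs (profile_coeff t) t"]) (auto simp: profile_deriv_def)
  done

end
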